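(* Fix an integer $d\ge2$, $V,A\in\mathcal S^{d-1}$ and $\kappa>0$. Then, as $n\to+\infty$, $$P_{\text{B-exp}}(a\mid n,d,V,\kappa)=P_0(a\mid n,d,V,\kappa)+o\!\left(\frac{1}{n\sqrt n}\right),\qquad P_0(a\mid n,d,V,\kappa)=\frac{f_{\mathrm{vMF}}(A\mid V,\kappa)\,\mathcal A(\mathcal S^{d-1})}{n}.$$
   Context: $\mathcal S^{d-1}=\{x\in\mathbb R^d:\|x\|_2=1\}$ with its surface measure; $\mathcal A(\mathcal S^{d-1})$ is its total surface area. Setting: $X_1,\dots,X_n$ i.i.d. uniform on $\mathcal S^{d-1}$, $A\in\mathcal S^{d-1}$ fixed (representing an action $a$). The von Mises–Fisher density is $f_{\mathrm{vMF}}(x\mid V,\kappa)=C_d(\kappa)e^{\kappa\langle V,x\rangle}$ on $\mathcal S^{d-1}$, with normalizing constant $C_d(\kappa)=\kappa^{d/2-1}/\big((2\pi)^{d/2}I_{d/2-1}(\kappa)\big)$, $I_\nu$ the modified Bessel function of the first kind. Define $$P_{\text{B-exp}}(a\mid n,d,V,\kappa)=\mathbb E_{X_1,\dots,X_n}\Big[\frac{e^{\kappa\langle V,A\rangle}}{e^{\kappa\langle V,A\rangle}+\sum_{i=1}^n e^{\kappa\langle V,X_i\rangle}}\Big].$$ *)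

theory Defs
  imports "HOL-Probability.Probability" "HOL-Library.Landau_Symbols"
begin

text \<open>Surface measure on the unit sphere of a Euclidean space, defined as the
  (standard) cone measure: sigma(B) = DIM * lambda({t x | 0 < t <= 1, x in B}),
  i.e. DIM times the push-forward of Lebesgue measure on the punctured unit ball
  under radial projection x / norm x.\<close>
definition sphere_surface :: "'a::euclidean_space measure" where
  "sphere_surface = scale_measure (of_nat DIM('a))
     (distr (restrict_space lborel (ball 0 1 - {0})) (restrict_space borel (sphere 0 1))
        (\<lambda>x. x /\<^sub>R norm x))"

definition sphere_area :: "'a::euclidean_space itself \<Rightarrow> real" where
  "sphere_area _ = measure (sphere_surface :: 'a measure) (sphere 0 1)"

definition sphere_uniform :: "'a::euclidean_space measure" where
  "sphere_uniform = uniform_measure sphere_surface (sphere 0 1)"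

definition bessel_I :: "real \<Rightarrow> real \<Rightarrow> real" where
  "bessel_I \<nu> x = (\<Sum>m. (x / 2) powr (2 * real m + \<nu>) / (fact m * Gamma (real m + \<nu> + 1)))"

definition vMF_const :: "nat \<Rightarrow> real \<Rightarrow> real" where
  "vMF_const d \<kappa> = \<kappa> powr (real d / 2 - 1) /
      ((2 * pi) powr (real d / 2) * bessel_I (real d / 2 - 1) \<kappa>)"

definition f_vMF :: "real^'n \<Rightarrow> real^'n \<Rightarrow> real \<Rightarrow> real" where
  "f_vMF x V \<kappa> = vMF_const CARD('n) \<kappa> * exp (\<kappa> * (V \<bullet> x))"

definition P_Bexp :: "nat \<Rightarrow> real^'n \<Rightarrow> real \<Rightarrow> real^'n \<Rightarrow> real" where
  "P_Bexp n V \<kappa> A =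
     (\<integral>X. exp (\<kappa> * (V \<bullet> A)) / (exp (\<kappa> * (V \<bullet> A)) + (\<Sum>i<n. exp (\<kappa> * (V \<bullet> X i))))
        \<partial>(PiM {..<n} (\<lambda>_. (sphere_uniform :: (real^'n) measure))))"

definition P_0 :: "nat \<Rightarrow> real^'n \<Rightarrow> real \<Rightarrow> real^'n \<Rightarrow> real" where
  "P_0 n V \<kappa> A = f_vMF A V \<kappa> * sphere_area TYPE(real^'n) / real n"

end

theory Submission
  imports Defs "HOL-Real_Asymp.Real_Asymp"
begin

text \<open>Write \<open>a = exp (\<kappa> (V \<bullet> A))\<close>, \<open>Y = exp (\<kappa> (V \<bullet> X))\<close> for \<open>X\<close> uniform on the sphere,
  \<open>\<mu> = E Y\<close>, \<open>S = \<Sum>i<n. Y\<^sub>i\<close> and \<open>N = n \<mu>\<close>. The identity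
  \<open>a/(a+S) - a/N = -a(a+S-N)/N\<^sup>2 + a(a+S-N)\<^sup>2/(N\<^sup>2(a+S))\<close>, together with \<open>E S = N\<close>,
  \<open>E (S-N)\<^sup>2 = n Var Y\<close> and \<open>S \<ge> n exp (-\<kappa>)\<close>, gives \<open>E (a/(a+S)) = a/N + O(1/n\<^sup>2)\<close>.

  It remains to see that \<open>a/N = P_0\<close>, i.e. that the surface integral of \<open>exp (\<kappa> (V \<bullet> \<theta>))\<close> is
  \<open>1 / C\<^sub>d(\<kappa>)\<close>. The odd part of the exponential integrates to zero, so the integral is the
  series of the even moments of \<open>V \<bullet> \<theta>\<close>; these are computed in polar coordinates from the
  moments of \<open>V \<bullet> x\<close> under the Gaussian measure on \<open>\<real>\<^sup>d\<close>, where \<open>V \<bullet> x\<close> is standard normal.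
  The resulting series is the Bessel series defining \<open>C\<^sub>d(\<kappa>)\<close>.\<close>

section \<open>Radial Gaussian integrals\<close>

lemma nn_integral_eq_has_bochner_integral:
  fixes f :: "'a \<Rightarrow> real"
  assumes "has_bochner_integral M f r" "\<And>x. 0 \<le> f x"
  shows "(\<integral>\<^sup>+x. ennreal (f x) \<partial>M) = ennreal r"
  using assms by (simp add: has_bochner_integral_iff nn_integral_eq_integral)

lemma nn_integral_gauss_tail:
  assumes "t \<ge> 0"
  shows "(\<integral>\<^sup>+s. indicator {t<..} s * ennreal (s * exp (- s\<^sup>2/2)) \<partial>lborel) = ennreal (exp (- t\<^sup>2/2))"
proof -
  have "(\<integral>\<^sup>+s. indicator {t<..} s * ennreal (s * exp (- s\<^sup>2/2)) \<partial>lborel) =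
        (\<integral>\<^sup>+s. ennreal (s * exp (- s\<^sup>2/2)) * indicator {t..} s \<partial>lborel)"
    by (rule nn_integral_cong_AE) (use AE_lborel_singleton[of t] in \<open>auto simp: indicator_def\<close>)
  also have "\<dots> = ennreal (0 - (- exp (- t\<^sup>2/2)))"
  proof (rule nn_integral_FTC_atLeast)
    show "((\<lambda>s::real. - exp (- s\<^sup>2/2)) \<longlongrightarrow> 0) at_top"
      by real_asymp
  next
    fix x :: real assume "t \<le> x"
    show "((\<lambda>s. - exp (- s\<^sup>2/2)) has_real_derivative x * exp (- x\<^sup>2/2)) (at x)"
      by (auto intro!: derivative_eq_intros)
    show "0 \<le> x * exp (- x\<^sup>2/2)" using \<open>t \<le> x\<close> assms by simp
  qed simp
  finally show ?thesis by simp
qed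

lemma Gamma_nat_plus_half: "Gamma (real k + 1/2) = fact (2*k) * sqrt pi / (4^k * fact k)"
proof (induction k)
  case 0
  then show ?case by (simp add: Gamma_one_half_real)
next
  case (Suc k)
  have not_pole: "real k + 1/2 \<notin> \<int>\<^sub>\<le>\<^sub>0"
    using nonpos_Ints_nonpos[of "real k + 1/2"] by force
  have fact2: "fact (2 * Suc k) = (2*real k + 2) * (2*real k + 1) * (fact (2*k) :: real)"
    by (simp add: numeral_2_eq_2 algebra_simps)
  have ratio: "(2*real k + 2) * (2*real k + 1) / (4 * (real k + 1)) = real k + 1/2"
    by (simp add: field_simps)
  have "Gamma (real (Suc k) + 1/2) = (real k + 1/2) * Gamma (real k + 1/2)"
    using Gamma_plus1[OF not_pole] by (simp add: algebra_simps)
  also have "\<dots> = (2*real k + 2) * (2*real k + 1) / (4 * (real k + 1)) *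
      (fact (2*k) * sqrt pi / (4^k * fact k))"
    unfolding Suc ratio ..
  also have "\<dots> = fact (2 * Suc k) * sqrt pi / (4 ^ Suc k * fact (Suc k))"
    unfolding fact2 by (simp add: field_simps)
  finally show ?case .
qed

lemma nn_integral_abs_power_gauss:
  "(\<integral>\<^sup>+s. ennreal (\<bar>s\<bar>^n * exp (- s\<^sup>2/2)) \<partial>lborel) =
     ennreal (sqrt (2*pi) * (if odd n then sqrt (2/pi) * 2^(n div 2) * fact (n div 2)
                               else fact n / (2^(n div 2) * fact (n div 2))))"
proof -
  have density: "\<bar>s\<bar>^n * exp (- s\<^sup>2/2) = sqrt (2*pi) * (std_normal_density s * \<bar>s\<bar>^n)" for s :: real
    by (simp add: normal_density_def real_sqrt_mult)
  have "(\<integral>\<^sup>+s. ennreal (\<bar>s\<bar>^n * exp (- s\<^sup>2/2)) \<partial>lborel) =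
        ennreal (sqrt (2*pi)) * (\<integral>\<^sup>+s. ennreal (std_normal_density s * \<bar>s\<bar>^n) \<partial>lborel)"
    unfolding density by (subst nn_integral_cmult[symmetric]) (auto simp: ennreal_mult)
  also have "(\<integral>\<^sup>+s. ennreal (std_normal_density s * \<bar>s\<bar>^n) \<partial>lborel) =
      ennreal (if odd n then sqrt (2/pi) * 2^(n div 2) * fact (n div 2)
                               else fact n / (2^(n div 2) * fact (n div 2)))"
  proof (cases "odd n")
    case True
    then obtain k where n: "n = 2*k+1" by (metis oddE)
    show ?thesis using nn_integral_eq_has_bochner_integral[OF std_normal_moment_abs_odd[of k]] n by simp
  next
    case False
    then obtain k where n: "n = 2*k" by (metis evenE)
    have "\<bar>s\<bar>^(2*k) = s^(2*k)" for s :: real by (simp add: power_mult power2_abs)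
    then show ?thesis using nn_integral_eq_has_bochner_integral[OF std_normal_moment_even[of k]] n by simp
  qed
  finally show ?thesis by (simp add: ennreal_mult)
qed

lemma nn_integral_positive_half_line_even:
  fixes f :: "real \<Rightarrow> real"
  assumes [measurable]: "f \<in> borel_measurable borel" and nonneg: "\<And>x. f x \<ge> 0" and even: "\<And>x. f (-x) = f x"
  shows "(\<integral>\<^sup>+s. indicator {0<..} s * ennreal (f s) \<partial>lborel) = (\<integral>\<^sup>+s. ennreal (f s) \<partial>lborel) / 2"
proof -
  let ?pos = "\<integral>\<^sup>+s. indicator {0<..} s * ennreal (f s) \<partial>lborel"
  have neg: "(\<integral>\<^sup>+s. indicator {..<0} s * ennreal (f s) \<partial>lborel) = ?pos"
  proof -
    have "(\<integral>\<^sup>+s. indicator {..<0} s * ennreal (f s) \<partial>lborel) =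
          ennreal \<bar>-1\<bar> * (\<integral>\<^sup>+s. indicator {..<0} (0 + -1 * s) * ennreal (f (0 + -1 * s)) \<partial>lborel)"
      by (rule nn_integral_real_affine) auto
    also have "\<dots> = ?pos"
      by (auto intro!: nn_integral_cong simp: even indicator_def)
    finally show ?thesis .
  qed
  have "(\<integral>\<^sup>+s. ennreal (f s) \<partial>lborel) =
        (\<integral>\<^sup>+s. indicator {0<..} s * ennreal (f s) + indicator {..<0} s * ennreal (f s) \<partial>lborel)"
    by (rule nn_integral_cong_AE) (use AE_lborel_singleton[of 0] in \<open>auto simp: indicator_def\<close>)
  also have "\<dots> = 2 * ?pos"
    by (subst nn_integral_add) (auto simp: neg mult_2)
  finally show ?thesis
    by (simp add: ennreal_divide_times mult.commute[of 2] ennreal_mult_divide_eq)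
qed

lemma nn_integral_radial_gauss_power:
  "(\<integral>\<^sup>+s. indicator {0<..} s * ennreal (s * exp (- s\<^sup>2/2)) * ennreal (s ^ k) \<partial>lborel) =
     ennreal (2 powr (real k/2) * Gamma (real k/2 + 1))"
proof -
  define n where "n = k + 1"
  define W where "W = sqrt (2*pi) * (if odd n then sqrt (2/pi) * 2^(n div 2) * fact (n div 2)
                               else fact n / (2^(n div 2) * fact (n div 2)))"
  have W_nonneg: "W \<ge> 0" unfolding W_def by simp
  have "(\<integral>\<^sup>+s. indicator {0<..} s * ennreal (s * exp (- s\<^sup>2/2)) * ennreal (s ^ k) \<partial>lborel) =
        (\<integral>\<^sup>+s. indicator {0<..} s * ennreal (\<bar>s\<bar>^n * exp (- s\<^sup>2/2)) \<partial>lborel)"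
    unfolding n_def by (auto intro!: nn_integral_cong simp: indicator_def ennreal_mult[symmetric] mult_ac)
  also have "\<dots> = (\<integral>\<^sup>+s. ennreal (\<bar>s\<bar>^n * exp (- s\<^sup>2/2)) \<partial>lborel) / 2"
    by (rule nn_integral_positive_half_line_even) auto
  also have "\<dots> = ennreal (W / 2)"
    unfolding nn_integral_abs_power_gauss W_def[symmetric] using W_nonneg
    by (metis divide_ennreal ennreal_numeral zero_less_numeral)
  also have "W / 2 = 2 powr (real k/2) * Gamma (real k/2 + 1)"
  proof (cases "even k")
    case True
    then obtain j where k: "k = 2*j" by (metis evenE)
    have "sqrt (2*pi) * sqrt (2/pi) = 2"
      by (simp add: real_sqrt_mult[symmetric])
    then have "W / 2 = 2^j * fact j"
      unfolding W_def using k by (simp add: n_def mult.assoc[symmetric])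
    moreover have "Gamma (real j + 1) = fact j" using Gamma_fact[of j] by (simp add: add.commute)
    ultimately show ?thesis using k by (simp add: powr_realpow)
  next
    case False
    then obtain j where k: "k = 2*j+1" by (metis oddE)
    define i where "i = j + 1"
    have n: "n = 2*i" using k by (simp add: n_def i_def)
    have four: "(4::real)^i = 2^i * 2^i" by (simp add: power_mult_distrib[symmetric])
    have "W / 2 = 2^i / sqrt 2 * (fact (2*i) * sqrt pi / (4^i * fact i))"
      unfolding W_def n four by (simp add: real_sqrt_mult field_simps)
    also have "\<dots> = 2 powr (real i - 1/2) * Gamma ((real i - 1/2) + 1)"
      using Gamma_nat_plus_half[of i] by (simp add: powr_diff powr_realpow powr_half_sqrt add.commute)
    also have "real i - 1/2 = real k/2" using k by (simp add: i_def field_simps)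
    finally show ?thesis .
  qed
  finally show ?thesis .
qed

section \<open>Polar coordinates\<close>

lemma sets_sphere_surface:
  "sets (sphere_surface :: 'a::euclidean_space measure) = sets (restrict_space borel (sphere (0::'a) 1))"
  unfolding sphere_surface_def by simp

lemma space_sphere_surface: "space (sphere_surface :: 'a::euclidean_space measure) = sphere (0::'a) 1"
  unfolding sphere_surface_def by (simp add: space_scale_measure space_restrict_space)

lemma borel_measurable_sphere_surface_inner[measurable]:
  "(\<lambda>\<theta>::'a::euclidean_space. V \<bullet> \<theta>) \<in> borel_measurable sphere_surface"
  by (subst measurable_cong_sets[OF sets_sphere_surface refl]) (intro measurable_restrict_space1, simp)

lemma nn_integral_sphere_surface:
  fixes f :: "'a::euclidean_space \<Rightarrow> ennreal"
  assumes [measurable]: "f \<in> borel_measurable borel"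
  shows "(\<integral>\<^sup>+x. f x \<partial>sphere_surface) =
    of_nat DIM('a) * (\<integral>\<^sup>+x. indicator (ball 0 1) x * f (x /\<^sub>R norm x) \<partial>lborel)"
proof -
  have normalize: "(\<lambda>x::'a. x /\<^sub>R norm x) \<in>
      restrict_space lborel (ball 0 1 - {0}) \<rightarrow>\<^sub>M restrict_space borel (sphere 0 1)"
    by (rule measurable_restrict_space2) (auto simp: space_restrict_space intro!: measurable_restrict_space1)
  have f_sphere: "f \<in> borel_measurable (restrict_space borel (sphere (0::'a) 1))"
    by (rule measurable_restrict_space1) simp
  have "(\<integral>\<^sup>+x. f x \<partial>sphere_surface) =
      of_nat DIM('a) * (\<integral>\<^sup>+x. indicator (ball 0 1 - {0}) x * f (x /\<^sub>R norm x) \<partial>lborel)"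
    unfolding sphere_surface_def
    by (simp add: nn_integral_scale_measure nn_integral_distr[OF normalize] f_sphere
        nn_integral_restrict_space ennreal_of_nat_eq_real_of_nat mult.commute
        cong: measurable_cong_sets)
  also have "(\<integral>\<^sup>+x. indicator (ball 0 1 - {0}) x * f (x /\<^sub>R norm x) \<partial>lborel) =
      (\<integral>\<^sup>+x. indicator (ball 0 1) x * f (x /\<^sub>R norm x) \<partial>lborel)"
    by (rule nn_integral_cong_AE, use AE_lborel_singleton[of 0] in eventually_elim)
      (auto simp: indicator_def)
  finally show ?thesis .
qed

lemma nn_integral_lborel_scaleR:
  fixes f :: "'a::euclidean_space \<Rightarrow> ennreal"
  assumes [measurable]: "f \<in> borel_measurable borel" and "c \<noteq> 0"
  shows "(\<integral>\<^sup>+x. f x \<partial>lborel) = ennreal (\<bar>c\<bar> ^ DIM('a)) * (\<integral>\<^sup>+x. f (c *\<^sub>R x) \<partial>lborel)"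
proof -
  have "(\<integral>\<^sup>+x. f x \<partial>lborel) =
      (\<integral>\<^sup>+x. f x \<partial>density (distr lborel borel (\<lambda>x. 0 + c *\<^sub>R x)) (\<lambda>_. ennreal (\<bar>c\<bar>^DIM('a))))"
    by (rule arg_cong[where f="\<lambda>M. \<integral>\<^sup>+x. f x \<partial>M"]) (rule lborel_affine, fact)
  also have "\<dots> = ennreal (\<bar>c\<bar> ^ DIM('a)) * (\<integral>\<^sup>+x. f (c *\<^sub>R x) \<partial>lborel)"
    by (simp add: nn_integral_density nn_integral_distr nn_integral_cmult)
  finally show ?thesis .
qed

text \<open>Fubini for a radial profile \<open>\<psi>\<close> against a function \<open>g\<close> that is positively homogeneous of
  degree \<open>p\<close>: each slice \<open>{x. norm x < s}\<close> is a ball of radius \<open>s\<close>, which contributes \<open>s ^ (DIM + p)\<close>.\<close>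
lemma nn_integral_radial_homogeneous:
  fixes g :: "'a::euclidean_space \<Rightarrow> ennreal" and \<psi> :: "real \<Rightarrow> ennreal"
  assumes [measurable]: "g \<in> borel_measurable borel" "\<psi> \<in> borel_measurable borel"
  assumes homogeneous: "\<And>c x. c > 0 \<Longrightarrow> g (c *\<^sub>R x) = ennreal (c ^ p) * g x"
  shows "(\<integral>\<^sup>+x. (\<integral>\<^sup>+s. indicator {norm x<..} s * \<psi> s \<partial>lborel) * g x \<partial>lborel) =
         (\<integral>\<^sup>+s. indicator {0<..} s * \<psi> s * ennreal (s ^ (DIM('a) + p)) \<partial>lborel) *
         (\<integral>\<^sup>+x. indicator (ball 0 1) x * g x \<partial>lborel)"
proof -
  have lborel_pair: "pair_sigma_finite (lborel :: 'a measure) (lborel :: real measure)"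
    unfolding pair_sigma_finite_def by (simp add: lborel.sigma_finite_measure_axioms)
  define B where "B = (\<integral>\<^sup>+x. indicator (ball 0 1) x * g x \<partial>lborel)"
  have indicator_less: "indicator {norm x<..} s = (if norm x < s then 1 else (0::ennreal))"
    for x :: 'a and s :: real
    by (simp add: indicator_def)
  have slice: "(\<integral>\<^sup>+x. indicator {norm x<..} s * \<psi> s * g x \<partial>lborel) =
      indicator {0<..} s * \<psi> s * ennreal (s ^ (DIM('a) + p)) * B" for s
  proof (cases "s > 0")
    case False
    then have "\<not> norm x < s" for x :: 'a
      using norm_ge_zero[of x] by linarith
    then have "indicator {norm x<..} s = (0::ennreal)" for x :: 'a
      by (simp add: indicator_def)
    then show ?thesis using False by simp
  next
    case True
    have "(\<integral>\<^sup>+x. indicator {norm x<..} s * \<psi> s * g x \<partial>lborel) =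
        \<psi> s * (\<integral>\<^sup>+x. indicator (ball 0 s) x * g x \<partial>lborel)"
      by (subst nn_integral_cmult[symmetric])
        (auto intro!: nn_integral_cong simp: indicator_def dist_norm mult.commute)
    also have "(\<integral>\<^sup>+x. indicator (ball 0 s) x * g x \<partial>lborel) =
        ennreal (s ^ DIM('a)) * (\<integral>\<^sup>+x. indicator (ball 0 s) (s *\<^sub>R x) * g (s *\<^sub>R x) \<partial>lborel)"
      using nn_integral_lborel_scaleR[of "\<lambda>x. indicator (ball 0 s) x * g x" s] True
      by (simp add: borel_measurable_indicator borel_measurable_times_ennreal)
    also have "(\<integral>\<^sup>+x. indicator (ball 0 s) (s *\<^sub>R x) * g (s *\<^sub>R x) \<partial>lborel) = ennreal (s ^ p) * B"
      unfolding B_def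
      by (subst nn_integral_cmult[symmetric])
        (use True in \<open>auto intro!: nn_integral_cong simp: homogeneous indicator_def dist_norm\<close>)
    finally show ?thesis using True by (simp add: ennreal_mult' power_add mult_ac)
  qed
  have "(\<integral>\<^sup>+x. (\<integral>\<^sup>+s. indicator {norm x<..} s * \<psi> s \<partial>lborel) * g x \<partial>lborel)
     = (\<integral>\<^sup>+x. (\<integral>\<^sup>+s. indicator {norm x<..} s * \<psi> s * g x \<partial>lborel) \<partial>lborel)"
    by (simp add: nn_integral_multc)
  also have "\<dots> = (\<integral>\<^sup>+s. (\<integral>\<^sup>+x. indicator {norm x<..} s * \<psi> s * g x \<partial>lborel) \<partial>lborel)"
    using pair_sigma_finite.Fubini'[OF lborel_pair,
        of "\<lambda>x s. indicator {norm x<..} s * \<psi> s * g x"]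
    by (simp add: indicator_less case_prod_beta')
  also have "\<dots> = (\<integral>\<^sup>+s. indicator {0<..} s * \<psi> s * ennreal (s ^ (DIM('a) + p)) \<partial>lborel) * B"
    by (simp add: slice nn_integral_multc)
  finally show ?thesis unfolding B_def .
qed

section \<open>Gaussian moments and homogeneous integrands\<close>

abbreviation std_normal :: "real measure" where
  "std_normal \<equiv> density lborel (\<lambda>x. ennreal (std_normal_density x))"

lemma prob_space_std_normal: "prob_space std_normal"
  by (rule prob_space_normal_density) simp

lemma PiM_std_normal:
  fixes I :: "'i set" assumes fin: "finite I"
  shows "PiM I (\<lambda>_. std_normal) =
    density (PiM I (\<lambda>_. lborel)) (\<lambda>x. \<Prod>i\<in>I. ennreal (std_normal_density (x i)))"
proof -
  have product: "product_sigma_finite (\<lambda>_::'i. std_normal)"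
    unfolding product_sigma_finite_def using prob_space_imp_sigma_finite[OF prob_space_std_normal] by simp
  interpret L: product_sigma_finite "\<lambda>_::'i. (lborel::real measure)"
    by (simp add: product_sigma_finite_def lborel.sigma_finite_measure_axioms)
  show ?thesis
  proof (rule product_sigma_finite.PiM_eqI[OF product fin, symmetric])
    show "sets (density (PiM I (\<lambda>_. lborel)) (\<lambda>x. \<Prod>i\<in>I. ennreal (std_normal_density (x i)))) =
        sets (PiM I (\<lambda>_. std_normal))"
      by (simp cong: sets_PiM_cong)
  next
    fix A assume "\<And>i. i \<in> I \<Longrightarrow> A i \<in> sets std_normal"
    then have A[measurable]: "\<And>i. i \<in> I \<Longrightarrow> A i \<in> sets lborel" by simp
    have box: "Pi\<^sub>E I A \<in> sets (PiM I (\<lambda>_. lborel))"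
      by (rule sets_PiM_I_finite[OF fin]) (use A in auto)
    have indicator_box: "(\<Prod>i\<in>I. ennreal (std_normal_density (x i))) * indicator (Pi\<^sub>E I A) x =
        (\<Prod>i\<in>I. ennreal (std_normal_density (x i)) * indicator (A i) (x i))"
      if "x \<in> space (PiM I (\<lambda>_. lborel))" for x
    proof (cases "\<forall>i\<in>I. x i \<in> A i")
      case True
      then have "x \<in> Pi\<^sub>E I A" using that by (auto simp: space_PiM PiE_def)
      then show ?thesis using True by (simp add: prod.distrib)
    next
      case False
      then obtain j where j: "j \<in> I" "x j \<notin> A j" by auto
      then have "x \<notin> Pi\<^sub>E I A" by auto
      moreover have "(\<Prod>i\<in>I. ennreal (std_normal_density (x i)) * indicator (A i) (x i)) = 0"
        by (intro prod_zero[OF fin] bexI[OF _ j(1)]) (use j in simp)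
      ultimately show ?thesis by simp
    qed
    have "emeasure (density (PiM I (\<lambda>_. lborel)) (\<lambda>x. \<Prod>i\<in>I. ennreal (std_normal_density (x i)))) (Pi\<^sub>E I A)
       = (\<integral>\<^sup>+x. (\<Prod>i\<in>I. ennreal (std_normal_density (x i)) * indicator (A i) (x i)) \<partial>PiM I (\<lambda>_. lborel))"
      by (simp add: emeasure_density box indicator_box cong: nn_integral_cong)
    also have "\<dots> = (\<Prod>i\<in>I. (\<integral>\<^sup>+y. ennreal (std_normal_density y) * indicator (A i) y \<partial>lborel))"
      by (rule L.product_nn_integral_prod[OF fin]) (use A in auto)
    also have "\<dots> = (\<Prod>i\<in>I. emeasure std_normal (A i))"
      by (rule prod.cong) (use A in \<open>auto simp: emeasure_density\<close>)
    finally show "emeasure (density (PiM I (\<lambda>_. lborel))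
        (\<lambda>x. \<Prod>i\<in>I. ennreal (std_normal_density (x i)))) (Pi\<^sub>E I A) = (\<Prod>i\<in>I. emeasure std_normal (A i))" .
  qed
qed

lemma indep_vars_PiM_components:
  assumes M: "\<And>i. i \<in> I \<Longrightarrow> prob_space (M i)" and "I \<noteq> {}"
  shows "prob_space.indep_vars (PiM I M) M (\<lambda>i \<omega>. \<omega> i) I"
proof -
  interpret P: prob_space "PiM I M" by (rule prob_space_PiM) (rule M)
  have "distr (PiM I M) (PiM I M) (\<lambda>\<omega>. \<lambda>i\<in>I. \<omega> i) = distr (PiM I M) (PiM I M) (\<lambda>\<omega>. \<omega>)"
    by (rule distr_cong) (auto simp: space_PiM PiE_def extensional_restrict)
  also have "\<dots> = PiM I (\<lambda>i. distr (PiM I M) (M i) (\<lambda>\<omega>. \<omega> i))"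
    by (simp add: distr_PiM_component M cong: PiM_cong)
  finally show ?thesis
    by (subst P.indep_vars_iff_distr_eq_PiM') (simp_all add: \<open>I \<noteq> {}\<close>)
qed

lemma distributed_inner_std_normal:
  fixes V :: "'a::euclidean_space"
  assumes V: "norm V = 1"
  shows "distributed (PiM Basis (\<lambda>_. std_normal)) lborel
      (\<lambda>f. \<Sum>b\<in>Basis. (V \<bullet> b) * f b) (\<lambda>x. ennreal (std_normal_density x))"
proof -
  define G where "G = PiM (Basis::'a set) (\<lambda>_. std_normal)"
  interpret G: prob_space G unfolding G_def by (rule prob_space_PiM) (rule prob_space_std_normal)
  define I where "I = {b\<in>(Basis::'a set). V \<bullet> b \<noteq> 0}"
  have I: "finite I" "I \<subseteq> Basis" unfolding I_def by auto
  have "I \<noteq> {}"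
    using V euclidean_all_zero_iff[of V] by (auto simp: I_def)
  have "G.indep_vars (\<lambda>_. std_normal) (\<lambda>b f. f b) I"
    using G.indep_vars_subset[OF _ I(2)] indep_vars_PiM_components[of Basis "\<lambda>_. std_normal"]
      prob_space_std_normal by (simp add: G_def)
  moreover have "(\<lambda>u. (V \<bullet> b) * u) \<in> std_normal \<rightarrow>\<^sub>M borel" for b
    by (simp cong: measurable_cong_sets)
  ultimately have indep: "G.indep_vars (\<lambda>_. borel) (\<lambda>b f. (V \<bullet> b) * f b) I"
    by (rule G.indep_vars_compose2)
  have coordinate: "distributed G lborel (\<lambda>f. f b) (\<lambda>x. ennreal (std_normal_density x))"
    if "b \<in> Basis" for b
    unfolding distributed_def
  proof (intro conjI)
    have "distr G lborel (\<lambda>f. f b) = distr G std_normal (\<lambda>f. f b)" by (rule distr_cong) auto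
    then show "distr G lborel (\<lambda>f. f b) = std_normal"
      using distr_PiM_component[of Basis "\<lambda>_. std_normal" b] prob_space_std_normal that
      by (simp add: G_def)
    show "(\<lambda>f. f b) \<in> G \<rightarrow>\<^sub>M lborel"
      using that by (simp add: G_def cong: measurable_cong_sets)
  qed simp
  have scaled: "distributed G lborel (\<lambda>f. (V \<bullet> b) * f b) (\<lambda>x. ennreal (normal_density 0 \<bar>V \<bullet> b\<bar> x))"
    if "b \<in> I" for b
    using G.normal_density_affine[OF coordinate, of b "V \<bullet> b" 0] that by (simp add: I_def)
  have "distributed G lborel (\<lambda>f. \<Sum>b\<in>I. (V \<bullet> b) * f b)
          (\<lambda>x. ennreal (normal_density (\<Sum>b\<in>I. 0) (sqrt (\<Sum>b\<in>I. (\<bar>V \<bullet> b\<bar>)\<^sup>2)) x))"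
    by (rule G.sum_indep_normal[OF I(1) \<open>I \<noteq> {}\<close> indep]) (auto simp: I_def intro: scaled)
  moreover have "(\<lambda>f. \<Sum>b\<in>I. (V \<bullet> b) * f b) = (\<lambda>f. \<Sum>b\<in>Basis. (V \<bullet> b) * f b)"
    by (intro ext sum.mono_neutral_left) (auto simp: I_def)
  moreover have "(\<Sum>b\<in>I. (\<bar>V \<bullet> b\<bar>)\<^sup>2) = 1"
  proof -
    have "(\<Sum>b\<in>I. (\<bar>V \<bullet> b\<bar>)\<^sup>2) = (\<Sum>b\<in>Basis. (V \<bullet> b)\<^sup>2)"
      by (simp, rule sum.mono_neutral_left) (auto simp: I_def)
    also have "\<dots> = V \<bullet> V" by (simp add: euclidean_inner[of V V] power2_eq_square)
    also have "\<dots> = 1" using V by (simp add: power2_norm_eq_inner[symmetric])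
    finally show ?thesis .
  qed
  ultimately show ?thesis unfolding G_def by simp
qed

lemma nn_integral_lborel_gauss:
  fixes h :: "'a::euclidean_space \<Rightarrow> ennreal"
  assumes [measurable]: "h \<in> borel_measurable borel"
  shows "(\<integral>\<^sup>+x. ennreal (exp (- (norm x)\<^sup>2/2)) * h x \<partial>lborel) =
    ennreal ((2*pi) powr (real DIM('a)/2)) *
      (\<integral>\<^sup>+f. h (\<Sum>b\<in>Basis. f b *\<^sub>R b) \<partial>PiM Basis (\<lambda>_. std_normal))"
proof -
  let ?E = "\<lambda>f::'a\<Rightarrow>real. \<Sum>b\<in>Basis. f b *\<^sub>R b"
  let ?density = "\<lambda>f::'a\<Rightarrow>real. \<Prod>b\<in>Basis. ennreal (std_normal_density (f b))"
  have gauss: "exp (- (norm (?E f))\<^sup>2/2) = (2*pi) powr (real DIM('a)/2) * (\<Prod>b\<in>Basis. std_normal_density (f b))"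
    for f
  proof -
    have "(norm (?E f))\<^sup>2 = (\<Sum>b\<in>Basis. (?E f \<bullet> b) * (?E f \<bullet> b))"
      unfolding power2_norm_eq_inner by (rule euclidean_inner)
    also have "\<dots> = (\<Sum>b\<in>Basis. (f b)\<^sup>2)"
      by (simp add: inner_sum_left_Basis power2_eq_square)
    finally have norm_sq: "(norm (?E f))\<^sup>2 = (\<Sum>b\<in>Basis. (f b)\<^sup>2)" .
    have "(\<Prod>b\<in>Basis. std_normal_density (f b)) = (\<Prod>b\<in>(Basis::'a set). 1 / sqrt (2*pi) * exp (- (f b)\<^sup>2/2))"
      by (simp add: std_normal_density_def)
    also have "\<dots> = (1 / sqrt (2*pi))^DIM('a) * exp (\<Sum>b\<in>(Basis::'a set). - (f b)\<^sup>2/2)"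
      by (simp only: prod.distrib prod_constant exp_sum finite_Basis)
    also have "(\<Sum>b\<in>(Basis::'a set). - (f b)\<^sup>2/2) = - (norm (?E f))\<^sup>2/2"
      unfolding norm_sq by (simp add: sum_divide_distrib sum_negf)
    finally have "(\<Prod>b\<in>Basis. std_normal_density (f b)) =
        (1 / sqrt (2*pi))^DIM('a) * exp (- (norm (?E f))\<^sup>2/2)" .
    moreover have "sqrt (2*pi)^DIM('a) = (2*pi) powr (real DIM('a)/2)"
      by (simp add: powr_half_sqrt[symmetric] powr_realpow[symmetric] powr_powr)
    ultimately show ?thesis by (simp add: power_one_over field_simps)
  qed
  have "(\<integral>\<^sup>+x. ennreal (exp (- (norm x)\<^sup>2/2)) * h x \<partial>lborel) =
        (\<integral>\<^sup>+f. ennreal (exp (- (norm (?E f))\<^sup>2/2)) * h (?E f) \<partial>PiM Basis (\<lambda>_. lborel))"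
    by (subst lborel_eq) (simp add: nn_integral_distr)
  also have "\<dots> = (\<integral>\<^sup>+f. ennreal ((2*pi) powr (real DIM('a)/2)) * (?density f * h (?E f)) \<partial>PiM Basis (\<lambda>_. lborel))"
    unfolding gauss by (intro nn_integral_cong) (simp add: ennreal_mult prod_ennreal prod_nonneg mult.assoc)
  also have "\<dots> = ennreal ((2*pi) powr (real DIM('a)/2)) *
      (\<integral>\<^sup>+f. h (?E f) \<partial>density (PiM Basis (\<lambda>_. lborel)) ?density)"
    by (simp add: nn_integral_cmult nn_integral_density)
  finally show ?thesis by (simp add: PiM_std_normal)
qed

lemma nn_integral_gauss_inner_even_power:
  fixes V :: "'a::euclidean_space"
  assumes V: "norm V = 1"
  shows "(\<integral>\<^sup>+x. ennreal (exp (- (norm x)\<^sup>2/2)) * ennreal ((V \<bullet> x)^(2*m)) \<partial>lborel) =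
         ennreal ((2*pi) powr (real DIM('a)/2) * (fact (2*m) / (2^m * fact m)))"
proof -
  have inner: "V \<bullet> (\<Sum>b\<in>Basis. f b *\<^sub>R b) = (\<Sum>b\<in>Basis. (V \<bullet> b) * f b)" for f
    by (simp add: inner_sum_right mult.commute)
  have "(\<integral>\<^sup>+f. ennreal ((\<Sum>b\<in>Basis. (V \<bullet> b) * f b)^(2*m)) \<partial>PiM Basis (\<lambda>_. std_normal)) =
        (\<integral>\<^sup>+u. ennreal (std_normal_density u) * ennreal (u^(2*m)) \<partial>lborel)"
    by (rule distributed_nn_integral[OF distributed_inner_std_normal[OF V], symmetric]) simp
  also have "\<dots> = ennreal (fact (2*m) / (2^m * fact m))"
    using nn_integral_eq_has_bochner_integral[OF std_normal_moment_even[of m]]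
    by (simp add: ennreal_mult'[symmetric] zero_le_even_power)
  finally have moment: "(\<integral>\<^sup>+f. ennreal ((\<Sum>b\<in>Basis. (V \<bullet> b) * f b)^(2*m)) \<partial>PiM Basis (\<lambda>_. std_normal)) =
      ennreal (fact (2*m) / (2^m * fact m))" .
  have "(\<integral>\<^sup>+x. ennreal (exp (- (norm x)\<^sup>2/2)) * ennreal ((V \<bullet> x)^(2*m)) \<partial>lborel) =
      ennreal ((2*pi) powr (real DIM('a)/2)) *
        (\<integral>\<^sup>+f. ennreal ((V \<bullet> (\<Sum>b\<in>Basis. f b *\<^sub>R b))^(2*m)) \<partial>PiM Basis (\<lambda>_. std_normal))"
    by (rule nn_integral_lborel_gauss) measurable
  then show ?thesis
    unfolding inner moment by (simp add: ennreal_mult'[symmetric])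
qed

lemma nn_integral_gauss_homogeneous:
  fixes g :: "'a::euclidean_space \<Rightarrow> ennreal"
  assumes [measurable]: "g \<in> borel_measurable borel"
    and homogeneous: "\<And>c x. c > 0 \<Longrightarrow> g (c *\<^sub>R x) = ennreal (c ^ p) * g x"
  shows "(\<integral>\<^sup>+x. ennreal (exp (- (norm x)\<^sup>2/2)) * g x \<partial>lborel) =
    ennreal (2 powr (real (DIM('a) + p)/2) * Gamma (real (DIM('a) + p)/2 + 1)) *
      (\<integral>\<^sup>+x. indicator (ball 0 1) x * g x \<partial>lborel)"
proof -
  have "(\<integral>\<^sup>+x. (\<integral>\<^sup>+s. indicator {norm x<..} s * ennreal (s * exp (- s\<^sup>2/2)) \<partial>lborel) * g x \<partial>lborel) =
      (\<integral>\<^sup>+s. indicator {0<..} s * ennreal (s * exp (- s\<^sup>2/2)) * ennreal (s ^ (DIM('a) + p)) \<partial>lborel) *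
      (\<integral>\<^sup>+x. indicator (ball 0 1) x * g x \<partial>lborel)"
    by (rule nn_integral_radial_homogeneous) (simp_all add: homogeneous)
  then show ?thesis
    by (simp only: nn_integral_gauss_tail[OF norm_ge_zero] nn_integral_radial_gauss_power)
qed

lemma nn_integral_power_derivative_tail:
  assumes "t \<ge> 0"
  shows "(\<integral>\<^sup>+s. indicator {t<..} s * (indicator {..1} s * ennreal (real p * s^(p-1))) \<partial>lborel) =
         ennreal (if t \<le> 1 then 1 - t^p else 0)"
proof (cases "t \<le> 1")
  case False
  then have "(\<lambda>s::real. indicator {t<..} s * (indicator {..1} s * ennreal (real p * s^(p-1)))) = (\<lambda>_. 0)"
    by (auto simp: indicator_def)
  then show ?thesis using False by simp
next
  case True
  have "(\<integral>\<^sup>+s. indicator {t<..} s * (indicator {..1} s * ennreal (real p * s^(p-1))) \<partial>lborel) =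
        (\<integral>\<^sup>+s. ennreal (real p * s^(p-1)) * indicator {t..1} s \<partial>lborel)"
    by (rule nn_integral_cong_AE) (use AE_lborel_singleton[of t] in \<open>auto simp: indicator_def\<close>)
  also have "\<dots> = ennreal (1^p - t^p)"
  proof (rule nn_integral_has_integral_lebesgue')
    show "0 \<le> real p * s^(p-1)" if "s \<in> {t..1}" for s using that assms by simp
    have "((\<lambda>s. s^p) has_vector_derivative real p * s^(p-1)) (at s within {t..1})" for s :: real
      using DERIV_pow[of p s]
      by (simp add: has_real_derivative_iff_has_vector_derivative[symmetric] has_field_derivative_at_within)
    then show "((\<lambda>s. real p * s^(p-1)) has_integral 1^p - t^p) {t..1}"
      using fundamental_theorem_of_calculus[OF True, of "\<lambda>s. s^p"] by simp
  qed
  finally show ?thesis using True by simp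
qed

lemma nn_integral_power_derivative_moment:
  "(\<integral>\<^sup>+s. indicator {0<..} s * (indicator {..1} s * ennreal (real p * s^(p-1))) * ennreal (s ^ (d + 0)) \<partial>lborel) =
   ennreal (real p / real (p + d))"
proof (cases "p = 0")
  case False
  have "(\<integral>\<^sup>+s. indicator {0<..} s * (indicator {..1} s * ennreal (real p * s^(p-1))) * ennreal (s ^ (d + 0)) \<partial>lborel) =
        (\<integral>\<^sup>+s. ennreal (real p * s^(p+d-1)) * indicator {0..1} s \<partial>lborel)"
  proof (rule nn_integral_cong_AE)
    have power: "s^(p-1) * s^d = s^(p+d-1)" for s :: real
      using False by (simp add: power_add[symmetric])
    show "AE s in lborel. indicator {0<..} s * (indicator {..1} s * ennreal (real p * s^(p-1))) * ennreal (s ^ (d + 0)) =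
          ennreal (real p * s^(p+d-1)) * indicator {0..1} s"
      using AE_lborel_singleton[of 0]
    proof eventually_elim
      case (elim s)
      then show ?case
        using power[of s] by (auto simp: indicator_def ennreal_mult'[symmetric] mult.assoc)
    qed
  qed
  also have "\<dots> = ennreal (real p / real (p+d) * 1^(p+d) - real p / real (p+d) * 0^(p+d))"
  proof (rule nn_integral_has_integral_lebesgue')
    show "0 \<le> real p * s^(p+d-1)" if "s \<in> {0..1}" for s using that by simp
    have "((\<lambda>s. real p / real (p+d) * s^(p+d)) has_real_derivative
        real p / real (p+d) * (real (p+d) * s^(p+d-1))) (at s)" for s :: real
      using DERIV_pow[of "p+d" s] by (intro DERIV_cmult) simp
    then have "((\<lambda>s. real p / real (p+d) * s^(p+d)) has_vector_derivative real p * s^(p+d-1))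
        (at s within {0..1})" for s :: real
      using False by (simp add: has_real_derivative_iff_has_vector_derivative[symmetric] has_field_derivative_at_within)
    then show "((\<lambda>s. real p * s^(p+d-1)) has_integral
        real p / real (p+d) * 1^(p+d) - real p / real (p+d) * 0^(p+d)) {0..1}"
      using fundamental_theorem_of_calculus[of 0 1 "\<lambda>s. real p / real (p+d) * s^(p+d)"] by simp
  qed
  also have "(0::real)^(p+d) = 0" using False by simp
  finally show ?thesis by simp
qed simp

text \<open>Stated additively because the integrals may be infinite.\<close>
lemma nn_integral_ball_norm_power_split:
  fixes g :: "'a::euclidean_space \<Rightarrow> ennreal"
  assumes [measurable]: "g \<in> borel_measurable borel"
    and scale_invariant: "\<And>c x. c > 0 \<Longrightarrow> g (c *\<^sub>R x) = g x"
  shows "(\<integral>\<^sup>+x. indicator (ball 0 1) x * g x \<partial>lborel) =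
    (\<integral>\<^sup>+x. indicator (ball 0 1) x * (ennreal (norm x ^ p) * g x) \<partial>lborel) +
    ennreal (real p / real (p + DIM('a))) * (\<integral>\<^sup>+x. indicator (ball 0 1) x * g x \<partial>lborel)"
proof -
  have [measurable]: "ball (0::'a) 1 \<in> sets borel" "g \<in> borel_measurable lborel" by simp_all
  let ?rest = "\<lambda>x::'a. ennreal (if norm x \<le> 1 then 1 - norm x ^ p else 0)"
  have split: "indicator (ball 0 1) x * g x =
      indicator (ball 0 1) x * (ennreal (norm x ^ p) * g x) + ?rest x * g x" for x :: 'a
  proof (cases "norm x < 1")
    case True
    then have "norm x ^ p \<le> 1" by (intro power_le_one) auto
    then have "ennreal (norm x ^ p) + ennreal (1 - norm x ^ p) = 1"
      by (subst ennreal_plus[symmetric]) auto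
    then show ?thesis using True
      by (simp add: indicator_def dist_norm flip: distrib_right)
  next
    case False
    then show ?thesis by (cases "norm x = 1") (auto simp: indicator_def dist_norm)
  qed
  have "(\<integral>\<^sup>+x. (\<integral>\<^sup>+s. indicator {norm x<..} s * (indicator {..1} s * ennreal (real p * s^(p-1))) \<partial>lborel) * g x \<partial>lborel) =
      (\<integral>\<^sup>+s. indicator {0<..} s * (indicator {..1} s * ennreal (real p * s^(p-1))) * ennreal (s ^ (DIM('a) + 0)) \<partial>lborel) *
      (\<integral>\<^sup>+x. indicator (ball 0 1) x * g x \<partial>lborel)"
    by (rule nn_integral_radial_homogeneous) (simp_all add: scale_invariant)
  then have rest: "(\<integral>\<^sup>+x. ?rest x * g x \<partial>lborel) =
      ennreal (real p / real (p + DIM('a))) * (\<integral>\<^sup>+x. indicator (ball 0 1) x * g x \<partial>lborel)"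
    by (simp only: nn_integral_power_derivative_tail[OF norm_ge_zero] nn_integral_power_derivative_moment)
  have "(\<integral>\<^sup>+x. indicator (ball 0 1) x * g x \<partial>lborel) =
      (\<integral>\<^sup>+x. indicator (ball 0 1) x * (ennreal (norm x ^ p) * g x) + ?rest x * g x \<partial>lborel)"
    by (rule nn_integral_cong) (rule split)
  also have "\<dots> = (\<integral>\<^sup>+x. indicator (ball 0 1) x * (ennreal (norm x ^ p) * g x) \<partial>lborel) +
      (\<integral>\<^sup>+x. ?rest x * g x \<partial>lborel)"
    by (rule nn_integral_add) measurable
  finally show ?thesis unfolding rest .
qed

section \<open>Moments of the surface measure and the von Mises--Fisher constant\<close>

lemma sphere_moment_arithmetic:
  fixes d m :: nat and g :: real
  assumes "d > 0"
    and split: "g = (2*pi) powr (real d/2) * (fact (2*m) / (2^m * fact m)) /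
        (2 powr (real (d + 2*m)/2) * Gamma (real (d + 2*m)/2 + 1)) + real (2*m) / real (2*m + d) * g"
  shows "real d * g = 2 * pi powr (real d/2) * fact (2*m) / (4^m * fact m * Gamma (real m + real d/2))"
proof -
  define z where "z = real m + real d/2"
  have z: "real (d + 2*m)/2 = z" "real (2*m + d) = 2 * z" by (simp_all add: z_def field_simps)
  have "z > 0" using \<open>d > 0\<close> by (simp add: z_def)
  then have Gamma_z: "Gamma (z + 1) = z * Gamma z" "Gamma z > 0"
    using Gamma_plus1[of z] nonpos_Ints_nonpos[of z] Gamma_real_pos[of z] by force+
  define b where "b = (2*pi) powr (real d/2) * (fact (2*m) / (2^m * fact m)) / (2 powr z * (z * Gamma z))"
  have "2 powr (real (d + 2*m)/2) * Gamma (real (d + 2*m)/2 + 1) = 2 powr z * (z * Gamma z)"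
    unfolding z Gamma_z(1) ..
  then have split': "g = b + real (2*m) / real (2*m + d) * g"
    using split unfolding b_def by simp
  have "real (2*m + d) * g = real (2*m + d) * b + real (2*m) * g"
    using \<open>d > 0\<close> by (subst split') (simp add: field_simps)
  then have "real d * g = 2 * z * b" by (simp add: z_def algebra_simps)
  also have "2 * z * b = 2 * pi powr (real d/2) * fact (2*m) / (4^m * fact m * Gamma z)"
  proof -
    have "(2*pi) powr (real d/2) = 2 powr (real d/2) * pi powr (real d/2)" by (simp add: powr_mult)
    moreover have "2 powr z = 2^m * 2 powr (real d/2)" by (simp add: z_def powr_add powr_realpow)
    moreover have "(4::real)^m = 2^m * 2^m" by (simp add: power_mult_distrib[symmetric])
    ultimately show ?thesis using \<open>z > 0\<close> Gamma_z by (simp add: b_def field_simps)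
  qed
  finally show ?thesis unfolding z_def .
qed

lemma nn_integral_ball_inner_even_power:
  fixes V :: "'a::euclidean_space"
  assumes V: "norm V = 1"
  shows "(\<integral>\<^sup>+x. indicator (ball 0 1) x * ennreal ((V \<bullet> x)^(2*m)) \<partial>lborel) =
    ennreal ((2*pi) powr (real DIM('a)/2) * (fact (2*m) / (2^m * fact m)) /
      (2 powr (real (DIM('a) + 2*m)/2) * Gamma (real (DIM('a) + 2*m)/2 + 1)))"
proof -
  define t where "t = 2 powr (real (DIM('a) + 2*m)/2) * Gamma (real (DIM('a) + 2*m)/2 + 1)"
  have "t > 0" unfolding t_def by (intro mult_pos_pos Gamma_real_pos) (auto intro!: add_nonneg_pos)
  define e where "e = (2*pi) powr (real DIM('a)/2) * (fact (2*m) / (2^m * fact m))"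
  define G where "G = (\<integral>\<^sup>+x. indicator (ball 0 1) x * ennreal ((V \<bullet> x)^(2*m)) \<partial>lborel)"
  have "ennreal e = ennreal t * G"
    unfolding e_def t_def G_def nn_integral_gauss_inner_even_power[OF V, symmetric]
    by (rule nn_integral_gauss_homogeneous)
      (simp_all add: inner_scaleR_right power_mult_distrib ennreal_mult' zero_le_even_power)
  then have "G = ennreal e / ennreal t"
    using \<open>t > 0\<close> by (simp add: ennreal_mult_divide_eq mult.commute[of "ennreal t"])
  also have "\<dots> = ennreal (e / t)"
    using \<open>t > 0\<close> by (simp add: divide_ennreal e_def)
  finally show ?thesis unfolding G_def e_def t_def .
qed

lemma scaleR_normalize:
  fixes x :: "'a::real_normed_vector"
  assumes "c > 0"
  shows "(c *\<^sub>R x) /\<^sub>R norm (c *\<^sub>R x) = x /\<^sub>R norm x"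
  using assms by (cases "x = 0") (simp_all add: field_simps)

lemma inner_normalize_power_le_1:
  fixes V x :: "'a::real_inner"
  assumes "norm V = 1"
  shows "(V \<bullet> (x /\<^sub>R norm x)) ^ (2*m) \<le> 1"
proof -
  have "\<bar>V \<bullet> (x /\<^sub>R norm x)\<bar> \<le> 1"
    using Cauchy_Schwarz_ineq2[of V "x /\<^sub>R norm x"] assms by (cases "x = 0") simp_all
  then have "\<bar>V \<bullet> (x /\<^sub>R norm x)\<bar> ^ (2*m) \<le> 1" by (rule power_le_one[OF abs_ge_zero])
  then show ?thesis by (simp add: power_abs[symmetric] power_mult power2_abs)
qed

lemma nn_integral_sphere_inner_even_power:
  fixes V :: "'a::euclidean_space"
  assumes V: "norm V = 1"
  shows "(\<integral>\<^sup>+\<theta>. ennreal ((V \<bullet> \<theta>)^(2*m)) \<partial>(sphere_surface::'a measure)) =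
     ennreal (2 * pi powr (real DIM('a)/2) * fact (2*m) / (4^m * fact m * Gamma (real m + real DIM('a)/2)))"
proof -
  define g0 where "g0 x = ennreal ((V \<bullet> (x /\<^sub>R norm x))^(2*m))" for x :: 'a
  define G0 where "G0 = (\<integral>\<^sup>+x. indicator (ball 0 1) x * g0 x \<partial>lborel)"
  define G where "G = (\<integral>\<^sup>+x. indicator (ball 0 1) x * ennreal ((V \<bullet> x)^(2*m)) \<partial>lborel)"
  have [measurable]: "g0 \<in> borel_measurable borel" unfolding g0_def by measurable
  have g0_scale: "g0 (c *\<^sub>R x) = g0 x" if "c > 0" for c x
    unfolding g0_def scaleR_normalize[OF that] ..
  have g0_le_1: "g0 x \<le> 1" for x
    using inner_normalize_power_le_1[OF V] by (simp add: g0_def)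
  have "G0 \<le> (\<integral>\<^sup>+x. indicator (ball (0::'a) 1) x \<partial>lborel)"
    unfolding G0_def by (rule nn_integral_mono) (use g0_le_1 in \<open>auto simp: indicator_def\<close>)
  also have "\<dots> < \<infinity>" using emeasure_bounded_finite[of "ball (0::'a) 1"] by simp
  finally have "G0 < \<infinity>" .
  then obtain g where g: "G0 = ennreal g" "g \<ge> 0" by (cases G0) auto
  have cone: "(\<integral>\<^sup>+\<theta>. ennreal ((V \<bullet> \<theta>)^(2*m)) \<partial>(sphere_surface::'a measure)) = of_nat DIM('a) * G0"
    unfolding G0_def g0_def by (rule nn_integral_sphere_surface) measurable
  have split: "G0 = G + ennreal (real (2*m) / real (2*m + DIM('a))) * G0"
  proof -
    have "G0 = (\<integral>\<^sup>+x. indicator (ball 0 1) x * (ennreal (norm x ^ (2*m)) * g0 x) \<partial>lborel) +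
        ennreal (real (2*m) / real (2*m + DIM('a))) * G0"
      unfolding G0_def by (rule nn_integral_ball_norm_power_split) (simp_all add: g0_scale)
    also have "(\<integral>\<^sup>+x. indicator (ball 0 1) x * (ennreal (norm x ^ (2*m)) * g0 x) \<partial>lborel) = G"
    proof -
      have "norm x ^ (2*m) * (V \<bullet> (x /\<^sub>R norm x))^(2*m) = (V \<bullet> x)^(2*m)" for x :: 'a
        by (cases "x = 0") (simp_all add: power_mult_distrib[symmetric] mult.assoc[symmetric])
      then show ?thesis unfolding G_def g0_def
        by (intro nn_integral_cong) (simp add: ennreal_mult'[symmetric] zero_le_even_power)
    qed
    finally show ?thesis .
  qed
  define b where "b = (2*pi) powr (real DIM('a)/2) * (fact (2*m) / (2^m * fact m)) /
      (2 powr (real (DIM('a) + 2*m)/2) * Gamma (real (DIM('a) + 2*m)/2 + 1))"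
  have "b \<ge> 0" unfolding b_def
    by (intro divide_nonneg_nonneg mult_nonneg_nonneg Gamma_real_nonneg) (auto intro!: add_nonneg_pos)
  moreover have "G = ennreal b" unfolding G_def b_def by (rule nn_integral_ball_inner_even_power[OF V])
  ultimately have "g = b + real (2*m) / real (2*m + DIM('a)) * g"
    using split g by (simp add: ennreal_mult'[symmetric] ennreal_plus[symmetric] del: ennreal_plus)
  then have "real DIM('a) * g =
      2 * pi powr (real DIM('a)/2) * fact (2*m) / (4^m * fact m * Gamma (real m + real DIM('a)/2))"
    unfolding b_def by (intro sphere_moment_arithmetic) simp_all
  then show ?thesis
    unfolding cone g(1) by (simp add: ennreal_of_nat_eq_real_of_nat ennreal_mult'[symmetric])
qed

lemma nn_integral_sphere_surface_uminus:
  fixes f :: "'a::euclidean_space \<Rightarrow> ennreal"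
  assumes [measurable]: "f \<in> borel_measurable borel"
  shows "(\<integral>\<^sup>+\<theta>. f \<theta> \<partial>sphere_surface) = (\<integral>\<^sup>+\<theta>. f (- \<theta>) \<partial>sphere_surface)"
proof -
  have [measurable]: "ball (0::'a) 1 \<in> sets borel" by simp
  have "(\<integral>\<^sup>+x. indicator (ball 0 1) x * f (x /\<^sub>R norm x) \<partial>lborel) =
      (\<integral>\<^sup>+x. indicator (ball 0 1) (- x) * f ((- x) /\<^sub>R norm (- x)) \<partial>lborel)"
    using nn_integral_lborel_scaleR[of "\<lambda>x. indicator (ball 0 1) x * f (x /\<^sub>R norm x)" "-1"] by simp
  then show ?thesis
    by (simp add: nn_integral_sphere_surface indicator_def)
qed

lemma sums_cosh_even: "(\<lambda>m. x^(2*m) / fact (2*m)) sums cosh (x::real)"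
proof -
  have "(\<lambda>m. (\<lambda>n. if even n then x ^ n /\<^sub>R fact n else 0) (2*m)) sums cosh x"
    by (subst sums_mono_reindex) (auto simp: strict_mono_def intro: cosh_converges elim!: oddE)
  then show ?thesis by (simp add: divide_inverse mult.commute)
qed

text \<open>The odd part of \<open>exp\<close> integrates to zero by the symmetry \<open>\<theta> \<mapsto> -\<theta>\<close>.\<close>
lemma nn_integral_sphere_exp_inner_eq_cosh:
  "(\<integral>\<^sup>+\<theta>. ennreal (exp (k * (V \<bullet> \<theta>))) \<partial>(sphere_surface::'a::euclidean_space measure)) =
   (\<integral>\<^sup>+\<theta>. ennreal (cosh (k * (V \<bullet> \<theta>))) \<partial>sphere_surface)"
proof -
  let ?J = "\<integral>\<^sup>+\<theta>. ennreal (exp (k * (V \<bullet> \<theta>))) \<partial>(sphere_surface::'a measure)"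
  have reflect: "?J = (\<integral>\<^sup>+\<theta>. ennreal (exp (- (k * (V \<bullet> \<theta>)))) \<partial>sphere_surface)"
    by (subst nn_integral_sphere_surface_uminus) simp_all
  have cosh: "ennreal (cosh y) = ennreal (1/2) * ennreal (exp y) + ennreal (1/2) * ennreal (exp (- y))"
    for y :: real
  proof -
    have "cosh y = 1/2 * exp y + 1/2 * exp (- y)"
      by (simp add: cosh_def scaleR_conv_of_real field_simps)
    then show ?thesis
      using ennreal_mult[of "1/2" "exp y"] ennreal_mult[of "1/2" "exp (- y)"]
        ennreal_plus[of "1/2 * exp y" "1/2 * exp (- y)"]
      by simp
  qed
  have "(\<integral>\<^sup>+\<theta>. ennreal (cosh (k * (V \<bullet> \<theta>))) \<partial>sphere_surface) = ennreal (1/2) * ?J + ennreal (1/2) * ?J"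
    unfolding cosh by (subst nn_integral_add) (auto simp: nn_integral_cmult reflect)
  also have "\<dots> = (ennreal (1/2) + ennreal (1/2)) * ?J" by (simp only: distrib_right)
  also have "ennreal (1/2) + ennreal (1/2) = 1" by (subst ennreal_plus[symmetric]) auto
  finally show ?thesis by simp
qed

lemma nn_integral_sphere_exp_inner_series:
  fixes V :: "'a::euclidean_space"
  assumes V: "norm V = 1"
  shows "(\<integral>\<^sup>+\<theta>. ennreal (exp (k * (V \<bullet> \<theta>))) \<partial>(sphere_surface::'a measure)) =
    (\<Sum>m. ennreal (2 * pi powr (real DIM('a)/2) * ((k/2)^(2*m) / (fact m * Gamma (real m + real DIM('a)/2)))))"
proof -
  have cosh_series: "ennreal (cosh (k * (V \<bullet> \<theta>))) =
      (\<Sum>m. ennreal (k^(2*m) / fact (2*m)) * ennreal ((V \<bullet> \<theta>)^(2*m)))" for \<theta> :: 'a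
  proof -
    have "ennreal (cosh (k * (V \<bullet> \<theta>))) = (\<Sum>m. ennreal ((k * (V \<bullet> \<theta>))^(2*m) / fact (2*m)))"
      using sums_cosh_even[of "k * (V \<bullet> \<theta>)"] by (simp add: suminf_ennreal2 sums_iff zero_le_even_power)
    then show ?thesis
      by (simp add: ennreal_mult'[symmetric] zero_le_even_power power_mult_distrib)
  qed
  have moment_term: "(\<integral>\<^sup>+\<theta>. ennreal (k^(2*m) / fact (2*m)) * ennreal ((V \<bullet> \<theta>)^(2*m)) \<partial>(sphere_surface::'a measure)) =
      ennreal (2 * pi powr (real DIM('a)/2) * ((k/2)^(2*m) / (fact m * Gamma (real m + real DIM('a)/2))))" for m
  proof -
    have k_half: "(k/2)^(2*m) = k^(2*m) / 4^m" by (simp add: power_divide power_mult)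
    have Gamma_pos: "Gamma (real m + real DIM('a)/2) > 0" by (intro Gamma_real_pos) (simp add: add_nonneg_pos)
    have "(\<integral>\<^sup>+\<theta>. ennreal (k^(2*m) / fact (2*m)) * ennreal ((V \<bullet> \<theta>)^(2*m)) \<partial>(sphere_surface::'a measure)) =
        ennreal (k^(2*m) / fact (2*m)) * ennreal (2 * pi powr (real DIM('a)/2) * fact (2*m) /
          (4^m * fact m * Gamma (real m + real DIM('a)/2)))"
      by (subst nn_integral_cmult) (simp_all add: nn_integral_sphere_inner_even_power[OF V])
    also have "\<dots> = ennreal (k^(2*m) / fact (2*m) * (2 * pi powr (real DIM('a)/2) * fact (2*m) /
          (4^m * fact m * Gamma (real m + real DIM('a)/2))))"
      using Gamma_pos by (subst ennreal_mult'[symmetric]) (simp_all add: zero_le_even_power)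
    also have "k^(2*m) / fact (2*m) * (2 * pi powr (real DIM('a)/2) * fact (2*m) /
          (4^m * fact m * Gamma (real m + real DIM('a)/2))) =
        2 * pi powr (real DIM('a)/2) * ((k/2)^(2*m) / (fact m * Gamma (real m + real DIM('a)/2)))"
      unfolding k_half using Gamma_pos by (simp add: field_simps)
    finally show ?thesis .
  qed
  show ?thesis
    by (simp add: nn_integral_sphere_exp_inner_eq_cosh cosh_series nn_integral_suminf moment_term)
qed

lemma emeasure_sphere_surface:
  "emeasure (sphere_surface :: 'a::euclidean_space measure) (sphere 0 1) =
    ennreal (2 * pi powr (real DIM('a)/2) / Gamma (real DIM('a)/2))"
proof -
  obtain b :: 'a where "b \<in> Basis" using nonempty_Basis by blast
  then have "norm b = 1" by simp
  from nn_integral_sphere_inner_even_power[OF this, of 0] show ?thesis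
    by (simp flip: space_sphere_surface)
qed

lemma vMF_const_series:
  fixes d :: nat and k :: real
  defines "a \<equiv> \<lambda>m. (k/2)^(2*m) / (fact m * Gamma (real m + real d/2))"
  assumes "k > 0" and "summable a"
  shows "vMF_const d k = 1 / (2 * pi powr (real d/2) * suminf a)"
proof -
  have "bessel_I (real d/2 - 1) k = (\<Sum>m. a m * (k/2) powr (real d/2 - 1))"
    unfolding bessel_I_def a_def using \<open>k > 0\<close>
    by (simp add: powr_add powr_realpow[symmetric] add_ac)
  also have "\<dots> = suminf a * (k/2) powr (real d/2 - 1)"
    by (rule suminf_mult2[OF \<open>summable a\<close>, symmetric])
  finally have bessel: "bessel_I (real d/2 - 1) k = suminf a * (k/2) powr (real d/2 - 1)" .
  have "(k/2) powr (real d/2 - 1) = k powr (real d/2 - 1) / 2 powr (real d/2 - 1)"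
    using \<open>k > 0\<close> by (simp add: powr_divide)
  moreover have "(2*pi) powr (real d/2) = 2 * 2 powr (real d/2 - 1) * pi powr (real d/2)"
    by (simp add: powr_mult powr_diff)
  ultimately show ?thesis
    using \<open>k > 0\<close> unfolding vMF_const_def bessel by (simp add: field_simps)
qed

lemma nn_integral_sphere_exp_inner:
  fixes V :: "'a::euclidean_space"
  assumes V: "norm V = 1" and "k > 0"
  shows "(\<integral>\<^sup>+\<theta>. ennreal (exp (k * (V \<bullet> \<theta>))) \<partial>(sphere_surface::'a measure)) =
      ennreal (1 / vMF_const DIM('a) k)"
    and "vMF_const DIM('a) k > 0"
proof -
  define a where "a m = (k/2)^(2*m) / (fact m * Gamma (real m + real DIM('a)/2))" for m
  define C where "C = 2 * pi powr (real DIM('a)/2)"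
  have "C > 0" by (simp add: C_def)
  have "a m > 0" for m
    using \<open>k > 0\<close> Gamma_real_pos[of "real m + real DIM('a)/2"] by (simp add: a_def add_nonneg_pos)
  let ?J = "\<integral>\<^sup>+\<theta>. ennreal (exp (k * (V \<bullet> \<theta>))) \<partial>(sphere_surface::'a measure)"
  have series: "?J = (\<Sum>m. ennreal (C * a m))"
    using nn_integral_sphere_exp_inner_series[OF V, of k] by (simp add: a_def C_def)
  have "?J \<le> (\<integral>\<^sup>+\<theta>. ennreal (exp k) \<partial>(sphere_surface::'a measure))"
  proof (rule nn_integral_mono)
    fix \<theta> :: 'a assume "\<theta> \<in> space sphere_surface"
    then have "V \<bullet> \<theta> \<le> 1" using Cauchy_Schwarz_ineq2[of V \<theta>] V by (simp add: space_sphere_surface)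
    then show "ennreal (exp (k * (V \<bullet> \<theta>))) \<le> ennreal (exp k)"
      using \<open>k > 0\<close> by (simp add: mult_left_le)
  qed
  also have "\<dots> < \<infinity>"
    by (simp add: space_sphere_surface emeasure_sphere_surface ennreal_mult_less_top)
  finally have "?J < \<infinity>" .
  then have "summable (\<lambda>m. C * a m)"
    using series \<open>C > 0\<close> \<open>\<And>m. a m > 0\<close> by (intro summable_suminf_not_top) (auto intro: less_imp_le)
  then have "summable a" using \<open>C > 0\<close> by (simp add: summable_cmult_iff)
  have "?J = ennreal (C * suminf a)"
    unfolding series using \<open>summable (\<lambda>m. C * a m)\<close> \<open>C > 0\<close> \<open>\<And>m. a m > 0\<close>
    by (subst suminf_ennreal2) (auto simp: suminf_mult intro: less_imp_le)
  moreover have "vMF_const DIM('a) k = 1 / (C * suminf a)"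
    using vMF_const_series[OF \<open>k > 0\<close>, of "DIM('a)"] \<open>summable a\<close>
    unfolding a_def[abs_def] C_def by simp
  moreover have "suminf a > 0" by (rule suminf_pos) fact+
  ultimately show "?J = ennreal (1 / vMF_const DIM('a) k)" "vMF_const DIM('a) k > 0"
    using \<open>C > 0\<close> by simp_all
qed

section \<open>The expected ratio for independent samples\<close>

lemma (in prob_space) integrable_bounded:
  fixes f :: "'a \<Rightarrow> real"
  assumes "f \<in> borel_measurable M" "\<And>x. x \<in> space M \<Longrightarrow> \<bar>f x\<bar> \<le> B"
  shows "integrable M f"
  using assms by (intro integrable_const_bound[where B=B]) auto

lemma integral_PiM_component:
  fixes f :: "'a \<Rightarrow> real"
  assumes "prob_space U" and [measurable]: "f \<in> borel_measurable U" and "i \<in> I"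
  shows "(\<integral>X. f (X i) \<partial>PiM I (\<lambda>_. U)) = (\<integral>x. f x \<partial>U)"
proof -
  have "(\<integral>X. f (X i) \<partial>PiM I (\<lambda>_. U)) = (\<integral>x. f x \<partial>distr (PiM I (\<lambda>_. U)) U (\<lambda>X. X i))"
    by (rule integral_distr[symmetric]) (use \<open>i \<in> I\<close> in simp_all)
  also have "distr (PiM I (\<lambda>_. U)) U (\<lambda>X. X i) = U"
    using distr_PiM_component[of I "\<lambda>_. U" i] assms by simp
  finally show ?thesis .
qed

lemma integral_PiM_component_product:
  fixes f g :: "'a \<Rightarrow> real"
  assumes U: "prob_space U" and "integrable U f" "integrable U g"
    and "finite I" "i \<in> I" "j \<in> I" "i \<noteq> j"
  shows "(\<integral>X. f (X i) * g (X j) \<partial>PiM I (\<lambda>_. U)) = (\<integral>x. f x \<partial>U) * (\<integral>x. g x \<partial>U)"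
proof -
  interpret U: prob_space U by fact
  have product: "product_sigma_finite (\<lambda>_::'i. U)"
    unfolding product_sigma_finite_def using prob_space_imp_sigma_finite[OF U] by simp
  define F where "F k = (if k = i then f else if k = j then g else (\<lambda>_. 1))" for k
  have "(\<integral>X. (\<Prod>k\<in>I. F k (X k)) \<partial>PiM I (\<lambda>_. U)) = (\<Prod>k\<in>I. (\<integral>x. F k x \<partial>U))"
    by (rule product_sigma_finite.product_integral_prod[OF product \<open>finite I\<close>])
      (simp add: F_def assms)
  moreover have "(\<Prod>k\<in>I. F k (X k)) = (\<Prod>k\<in>{i,j}. F k (X k))" for X
    by (rule prod.mono_neutral_right) (use assms in \<open>auto simp: F_def\<close>)
  moreover have "(\<Prod>k\<in>I. (\<integral>x. F k x \<partial>U)) = (\<Prod>k\<in>{i,j}. (\<integral>x. F k x \<partial>U))"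
    by (rule prod.mono_neutral_right) (use assms in \<open>auto simp: F_def U.prob_space\<close>)
  ultimately show ?thesis using \<open>i \<noteq> j\<close> by (simp add: F_def)
qed

lemma integral_PiM_sum_centered:
  fixes Y :: "'a \<Rightarrow> real"
  assumes U: "prob_space U" and [measurable]: "Y \<in> borel_measurable U"
    and bounded: "\<And>x. x \<in> space U \<Longrightarrow> \<bar>Y x\<bar> \<le> B"
  shows "(\<integral>X. (\<Sum>i<n. Y (X i) - (\<integral>x. Y x \<partial>U)) \<partial>PiM {..<n} (\<lambda>_. U)) = 0"
proof -
  interpret U: prob_space U by fact
  interpret P: prob_space "PiM {..<n} (\<lambda>_. U)" by (intro prob_space_PiM U)
  have "integrable U Y" by (rule U.integrable_bounded) (use bounded in auto)
  have "integrable (PiM {..<n} (\<lambda>_. U)) (\<lambda>X. Y (X i))" if "i < n" for i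
    by (rule P.integrable_bounded[where B=B]) (use that bounded in \<open>auto simp: space_PiM\<close>)
  then show ?thesis
    using \<open>integrable U Y\<close> U
    by (simp add: Bochner_Integration.integral_sum Bochner_Integration.integral_diff
        P.prob_space integral_PiM_component)
qed

lemma integral_PiM_centered_product:
  fixes Y :: "'a \<Rightarrow> real"
  assumes U: "prob_space U" and "integrable U Y" and "i \<in> I" "j \<in> I" "finite I"
  defines "\<mu> \<equiv> \<integral>x. Y x \<partial>U"
  shows "(\<integral>X. (Y (X i) - \<mu>) * (Y (X j) - \<mu>) \<partial>PiM I (\<lambda>_. U)) =
    (if i = j then (\<integral>x. (Y x - \<mu>)\<^sup>2 \<partial>U) else 0)"
proof (cases "i = j")
  case True
  have [measurable]: "Y \<in> borel_measurable U" using \<open>integrable U Y\<close> by simp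
  show ?thesis
    using True integral_PiM_component[OF U, of "\<lambda>x. (Y x - \<mu>)\<^sup>2" i I] \<open>i \<in> I\<close>
    by (simp add: power2_eq_square)
next
  case False
  interpret prob_space U by fact
  have "(\<integral>X. (Y (X i) - \<mu>) * (Y (X j) - \<mu>) \<partial>PiM I (\<lambda>_. U)) = (\<integral>x. Y x - \<mu> \<partial>U) * (\<integral>x. Y x - \<mu> \<partial>U)"
    by (rule integral_PiM_component_product[OF U]) (use assms False in auto)
  also have "(\<integral>x. Y x - \<mu> \<partial>U) = 0"
    using \<open>integrable U Y\<close> by (simp add: \<mu>_def prob_space)
  finally show ?thesis using False by simp
qed

lemma integral_PiM_sum_centered_square:
  fixes Y :: "'a \<Rightarrow> real"
  assumes U: "prob_space U" and [measurable]: "Y \<in> borel_measurable U"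
    and bounded: "\<And>x. x \<in> space U \<Longrightarrow> \<bar>Y x\<bar> \<le> B"
  shows "(\<integral>X. (\<Sum>i<n. Y (X i) - (\<integral>x. Y x \<partial>U))\<^sup>2 \<partial>PiM {..<n} (\<lambda>_. U)) =
    real n * (\<integral>x. (Y x - (\<integral>x. Y x \<partial>U))\<^sup>2 \<partial>U)"
proof -
  interpret U: prob_space U by fact
  define P where "P = PiM {..<n} (\<lambda>_. U)"
  interpret P: prob_space P unfolding P_def by (intro prob_space_PiM U)
  define \<mu> where "\<mu> = (\<integral>x. Y x \<partial>U)"
  define Z where "Z i X = Y (X i) - \<mu>" for i and X :: "nat \<Rightarrow> 'a"
  have "integrable U Y" by (rule U.integrable_bounded) (use bounded in auto)
  have "\<bar>\<mu>\<bar> \<le> (\<integral>x. \<bar>Y x\<bar> \<partial>U)" unfolding \<mu>_def by (rule integral_abs_bound)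
  also have "\<dots> \<le> B"
    by (rule U.integral_le_const) (use bounded \<open>integrable U Y\<close> in auto)
  finally have "\<bar>\<mu>\<bar> \<le> B" .
  have Z_bound: "\<bar>Z i X\<bar> \<le> 2*B" if "X \<in> space P" "i < n" for i X
  proof -
    have "X i \<in> space U" using that by (auto simp: P_def space_PiM)
    then show ?thesis using bounded[of "X i"] \<open>\<bar>\<mu>\<bar> \<le> B\<close> by (simp add: Z_def)
  qed
  have integrable_ZZ: "integrable P (\<lambda>X. Z i X * Z j X)" if "i < n" "j < n" for i j
  proof (rule P.integrable_bounded)
    fix X assume "X \<in> space P"
    then show "\<bar>Z i X * Z j X\<bar> \<le> (2*B) * (2*B)"
      unfolding abs_mult using Z_bound that \<open>\<bar>\<mu>\<bar> \<le> B\<close> by (intro mult_mono) auto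
  qed (use that in \<open>simp add: Z_def P_def\<close>)
  have moments: "(\<integral>X. Z i X * Z j X \<partial>P) = (if i = j then (\<integral>x. (Y x - \<mu>)\<^sup>2 \<partial>U) else 0)"
    if "i < n" "j < n" for i j
    unfolding Z_def P_def \<mu>_def
    by (rule integral_PiM_centered_product[OF U \<open>integrable U Y\<close>]) (use that in auto)
  have "(\<integral>X. (\<Sum>i<n. Z i X)\<^sup>2 \<partial>P) = (\<integral>X. (\<Sum>i<n. \<Sum>j<n. Z i X * Z j X) \<partial>P)"
    by (simp add: power2_eq_square sum_product)
  also have "\<dots> = (\<Sum>i<n. \<Sum>j<n. (\<integral>X. Z i X * Z j X \<partial>P))"
    by (subst Bochner_Integration.integral_sum, fastforce intro: integrable_ZZ)
      (intro sum.cong refl Bochner_Integration.integral_sum, auto intro: integrable_ZZ)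
  also have "\<dots> = (\<Sum>i<n. (\<integral>x. (Y x - \<mu>)\<^sup>2 \<partial>U))"
    by (simp add: moments)
  finally have "(\<integral>X. (\<Sum>i<n. Z i X)\<^sup>2 \<partial>P) = real n * (\<integral>x. (Y x - \<mu>)\<^sup>2 \<partial>U)" by simp
  then show ?thesis by (simp add: Z_def P_def \<mu>_def)
qed

lemma ratio_second_order_expansion:
  fixes a S N :: real
  assumes "a + S \<noteq> 0" "N \<noteq> 0"
  shows "a / (a + S) - a / N = - a / N\<^sup>2 * (a + (S - N)) + a * (a + (S - N))\<^sup>2 / (N\<^sup>2 * (a + S))"
proof -
  have "- a / N\<^sup>2 * (t - N) + a * (t - N)\<^sup>2 / (N\<^sup>2 * t) = a / t - a / N" if "t \<noteq> 0" for t
    using that \<open>N \<noteq> 0\<close> by (simp add: field_simps power2_eq_square)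
  from this[OF \<open>a + S \<noteq> 0\<close>] show ?thesis by (simp add: algebra_simps)
qed

locale bounded_sample =
  fixes U :: "'a measure" and Y :: "'a \<Rightarrow> real" and lo hi :: real
  assumes prob_space_U: "prob_space U"
    and measurable_Y[measurable]: "Y \<in> borel_measurable U"
    and Y_range: "\<And>x. x \<in> space U \<Longrightarrow> lo \<le> Y x \<and> Y x \<le> hi"
    and lo_pos: "0 < lo"
begin

abbreviation sample :: "nat \<Rightarrow> (nat \<Rightarrow> 'a) measure" where
  "sample n \<equiv> PiM {..<n} (\<lambda>_. U)"

definition mean :: real where
  "mean = (\<integral>x. Y x \<partial>U)"

definition sample_sum :: "(nat \<Rightarrow> 'a) \<Rightarrow> nat \<Rightarrow> real" where
  "sample_sum X n = (\<Sum>i<n. Y (X i))"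

lemma prob_space_sample: "prob_space (sample n)"
  by (intro prob_space_PiM prob_space_U)

lemma abs_Y_le: "x \<in> space U \<Longrightarrow> \<bar>Y x\<bar> \<le> hi"
  using Y_range lo_pos by force

lemma mean_range: "lo \<le> mean" "mean \<le> hi"
proof -
  interpret prob_space U by (rule prob_space_U)
  have "integrable U Y" by (rule integrable_bounded) (use abs_Y_le in auto)
  then show "lo \<le> mean" "mean \<le> hi"
    unfolding mean_def using Y_range by (auto intro!: integral_ge_const integral_le_const)
qed

lemma sample_sum_range:
  assumes "X \<in> space (sample n)"
  shows "real n * lo \<le> sample_sum X n" "sample_sum X n \<le> real n * hi"
  using sum_mono[of "{..<n}" "\<lambda>_. lo" "\<lambda>i. Y (X i)"] sum_mono[of "{..<n}" "\<lambda>i. Y (X i)" "\<lambda>_. hi"]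
    Y_range assms by (auto simp: sample_sum_def space_PiM)

lemma abs_centered_sum_le:
  assumes "X \<in> space (sample n)"
  shows "\<bar>(\<Sum>i<n. Y (X i) - mean)\<bar> \<le> real n * hi"
proof -
  have "real n * lo \<le> real n * mean" "real n * mean \<le> real n * hi" "0 \<le> real n * lo"
    using mean_range lo_pos by (simp_all add: mult_left_mono)
  then show ?thesis
    using sample_sum_range[OF assms] by (simp add: sample_sum_def sum_subtractf abs_le_iff)
qed

lemma variance_le: "(\<integral>x. (Y x - mean)\<^sup>2 \<partial>U) \<le> hi\<^sup>2"
proof -
  interpret prob_space U by (rule prob_space_U)
  have "\<bar>Y x - mean\<bar> \<le> hi" if "x \<in> space U" for x
    using Y_range[OF that] mean_range lo_pos by (auto simp: abs_le_iff)
  then show ?thesis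
    by (intro integral_le_const integrable_bounded[where B="hi\<^sup>2"])
      (auto simp: abs_le_square_iff[symmetric] intro!: AE_I2 order.trans[OF _ abs_ge_self])
qed

lemma integral_centered_sum: "(\<integral>X. (\<Sum>i<n. Y (X i) - mean) \<partial>sample n) = 0"
  unfolding mean_def by (rule integral_PiM_sum_centered[OF prob_space_U measurable_Y abs_Y_le])

lemma integral_centered_sum_square:
  "(\<integral>X. (\<Sum>i<n. Y (X i) - mean)\<^sup>2 \<partial>sample n) = real n * (\<integral>x. (Y x - mean)\<^sup>2 \<partial>U)"
  unfolding mean_def by (rule integral_PiM_sum_centered_square[OF prob_space_U measurable_Y abs_Y_le])

lemma integrable_centered_sum_power:
  "integrable (sample n) (\<lambda>X. (\<Sum>i<n. Y (X i) - mean) ^ k)"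
proof (rule prob_space.integrable_bounded[OF prob_space_sample, where B="(real n * hi) ^ k"])
  fix X assume "X \<in> space (sample n)"
  then show "\<bar>(\<Sum>i<n. Y (X i) - mean) ^ k\<bar> \<le> (real n * hi) ^ k"
    unfolding power_abs by (intro power_mono abs_centered_sum_le) auto
qed measurable

lemma integral_ratio_expansion:
  assumes "0 < a" "1 \<le> n"
  defines "N \<equiv> real n * mean"
  shows "(\<integral>X. a / (a + sample_sum X n) \<partial>sample n) - a / N =
    - (a / N)\<^sup>2 + (\<integral>X. a * (a + (\<Sum>i<n. Y (X i) - mean))\<^sup>2 / (N\<^sup>2 * (a + sample_sum X n)) \<partial>sample n)"
proof -
  interpret P: prob_space "sample n" by (rule prob_space_sample)
  define D where "D X = (\<Sum>i<n. Y (X i) - mean)" for X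
  define R where "R X = a * (a + D X)\<^sup>2 / (N\<^sup>2 * (a + sample_sum X n))" for X
  have "N > 0" using mean_range lo_pos \<open>1 \<le> n\<close> by (simp add: N_def)
  have S_pos: "a + sample_sum X n > 0" if "X \<in> space (sample n)" for X
    using sample_sum_range(1)[OF that] lo_pos \<open>0 < a\<close> by (smt (verit) mult_nonneg_nonneg of_nat_0_le_iff)
  have expansion: "a / (a + sample_sum X n) - a / N = - a / N\<^sup>2 * (a + D X) + R X"
    if "X \<in> space (sample n)" for X
  proof -
    have "D X = sample_sum X n - N" by (simp add: D_def sample_sum_def N_def sum_subtractf)
    then show ?thesis
      unfolding R_def using S_pos[OF that] \<open>N > 0\<close> by (simp add: ratio_second_order_expansion)
  qed
  have [measurable]: "(\<lambda>X. sample_sum X n) \<in> borel_measurable (sample n)"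
    unfolding sample_sum_def by measurable
  have "integrable (sample n) (\<lambda>X. a / (a + sample_sum X n))"
  proof (rule P.integrable_bounded[where B=1])
    fix X assume "X \<in> space (sample n)"
    moreover have "0 \<le> real n * lo" using lo_pos by simp
    ultimately show "\<bar>a / (a + sample_sum X n)\<bar> \<le> 1"
      using S_pos sample_sum_range \<open>0 < a\<close> by (fastforce simp: divide_le_eq_1)
  qed measurable
  moreover have "integrable (sample n) D"
    using integrable_centered_sum_power[of n 1] by (simp add: D_def[abs_def])
  ultimately have "integrable (sample n) (\<lambda>X. (a / (a + sample_sum X n) - a / N) + a / N\<^sup>2 * (a + D X))"
    by simp
  moreover have "integrable (sample n) R \<longleftrightarrow>
      integrable (sample n) (\<lambda>X. (a / (a + sample_sum X n) - a / N) + a / N\<^sup>2 * (a + D X))"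
    by (rule Bochner_Integration.integrable_cong) (simp_all add: expansion)
  ultimately have "integrable (sample n) R" by simp
  have "(\<integral>X. D X \<partial>sample n) = 0"
    unfolding D_def by (rule integral_centered_sum)
  then have "(\<integral>X. - a / N\<^sup>2 * (a + D X) + R X \<partial>sample n) = - (a / N)\<^sup>2 + (\<integral>X. R X \<partial>sample n)"
    using \<open>integrable (sample n) D\<close> \<open>integrable (sample n) R\<close> by (simp add: P.prob_space power2_eq_square)
  moreover have "(\<integral>X. a / (a + sample_sum X n) \<partial>sample n) - a / N =
      (\<integral>X. - a / N\<^sup>2 * (a + D X) + R X \<partial>sample n)"
  proof -
    have "(\<integral>X. a / (a + sample_sum X n) \<partial>sample n) - a / N =
        (\<integral>X. a / (a + sample_sum X n) - a / N \<partial>sample n)"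
      using \<open>integrable (sample n) (\<lambda>X. a / (a + sample_sum X n))\<close> by (simp add: P.prob_space)
    also have "\<dots> = (\<integral>X. - a / N\<^sup>2 * (a + D X) + R X \<partial>sample n)"
      by (rule Bochner_Integration.integral_cong[OF refl expansion])
    finally show ?thesis .
  qed
  ultimately show ?thesis by (simp add: R_def D_def)
qed

lemma integral_ratio_bound:
  assumes "0 < a" "1 \<le> n"
  shows "\<bar>(\<integral>X. a / (a + sample_sum X n) \<partial>sample n) - a / (real n * mean)\<bar>
          \<le> (a\<^sup>2 / mean\<^sup>2 + a * (a\<^sup>2 + hi\<^sup>2) / (mean\<^sup>2 * lo)) / (real n)\<^sup>2"
proof -
  interpret P: prob_space "sample n" by (rule prob_space_sample)
  define N where "N = real n * mean"
  define D where "D X = (\<Sum>i<n. Y (X i) - mean)" for X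
  define c where "c = a / (N\<^sup>2 * (real n * lo))"
  have "N > 0" "0 \<le> c" using mean_range lo_pos \<open>1 \<le> n\<close> \<open>0 < a\<close> by (simp_all add: N_def c_def)
  let ?R = "\<lambda>X. a * (a + D X)\<^sup>2 / (N\<^sup>2 * (a + sample_sum X n))"
  have R_range: "0 \<le> ?R X \<and> ?R X \<le> c * (a + D X)\<^sup>2" if "X \<in> space (sample n)" for X
  proof -
    have "0 \<le> real n * lo" using lo_pos by simp
    then have "real n * lo \<le> sample_sum X n" "0 \<le> sample_sum X n"
      using sample_sum_range(1)[OF that] by simp_all
    then show ?thesis using \<open>0 < a\<close> \<open>N > 0\<close> lo_pos \<open>1 \<le> n\<close>
      by (auto simp: c_def intro!: divide_left_mono mult_pos_pos add_pos_nonneg divide_nonneg_pos)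
  qed
  have [measurable]: "D \<in> borel_measurable (sample n)" unfolding D_def by measurable
  have "integrable (sample n) (\<lambda>X. (a + D X)\<^sup>2)"
  proof (rule P.integrable_bounded[where B="(a + real n * hi)\<^sup>2"])
    fix X assume "X \<in> space (sample n)"
    then have "\<bar>D X\<bar> \<le> real n * hi" unfolding D_def by (rule abs_centered_sum_le)
    then have "\<bar>a + D X\<bar> \<le> a + real n * hi" using \<open>0 < a\<close> by (simp add: abs_le_iff)
    then show "\<bar>(a + D X)\<^sup>2\<bar> \<le> (a + real n * hi)\<^sup>2" by (simp add: abs_le_square_iff[symmetric])
  qed measurable
  have "(\<integral>X. (a + D X)\<^sup>2 \<partial>sample n) = a\<^sup>2 + real n * (\<integral>x. (Y x - mean)\<^sup>2 \<partial>U)"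
    using integrable_centered_sum_power[of n 1] integrable_centered_sum_power[of n 2]
      integral_centered_sum[of n] integral_centered_sum_square[of n]
    by (simp add: D_def power2_sum P.prob_space)
  have "(\<integral>X. ?R X \<partial>sample n) \<le> (\<integral>X. c * (a + D X)\<^sup>2 \<partial>sample n)"
    by (rule integral_mono') (use \<open>integrable (sample n) (\<lambda>X. (a + D X)\<^sup>2)\<close> R_range \<open>0 \<le> c\<close> in auto)
  also have "\<dots> \<le> c * (a\<^sup>2 + real n * hi\<^sup>2)"
    using variance_le \<open>0 \<le> c\<close> \<open>(\<integral>X. (a + D X)\<^sup>2 \<partial>sample n) = _\<close> by (auto intro!: mult_left_mono)
  also have "\<dots> \<le> a * (a\<^sup>2 + hi\<^sup>2) / (mean\<^sup>2 * lo) / (real n)\<^sup>2"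
    using \<open>0 < a\<close> lo_pos mean_range \<open>1 \<le> n\<close>
    by (simp add: c_def N_def field_simps power2_eq_square mult_left_mono)
  finally have "(\<integral>X. ?R X \<partial>sample n) \<le> a * (a\<^sup>2 + hi\<^sup>2) / (mean\<^sup>2 * lo) / (real n)\<^sup>2" .
  moreover have "0 \<le> (\<integral>X. ?R X \<partial>sample n)" using R_range by (intro integral_nonneg_AE AE_I2) auto
  moreover have "(a / N)\<^sup>2 = a\<^sup>2 / mean\<^sup>2 / (real n)\<^sup>2" by (simp add: N_def power_divide power_mult_distrib)
  moreover have "0 \<le> a\<^sup>2 / mean\<^sup>2 / (real n)\<^sup>2" by simp
  ultimately have "\<bar>(\<integral>X. a / (a + sample_sum X n) \<partial>sample n) - a / N\<bar> \<le>
      a\<^sup>2 / mean\<^sup>2 / (real n)\<^sup>2 + a * (a\<^sup>2 + hi\<^sup>2) / (mean\<^sup>2 * lo) / (real n)\<^sup>2"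
    unfolding abs_le_iff integral_ratio_expansion[OF assms, folded N_def D_def] by linarith
  then show ?thesis by (simp only: N_def add_divide_distrib)
qed

end
section \<open>The uniform distribution on the sphere\<close>

lemma emeasure_sphere_surface_eq_area:
  "emeasure (sphere_surface :: 'a::euclidean_space measure) (sphere 0 1) = ennreal (sphere_area TYPE('a))"
  and sphere_area_pos: "sphere_area TYPE('a) > 0"
proof -
  have "Gamma (real DIM('a)/2) > 0" by (rule Gamma_real_pos) simp
  then show "emeasure (sphere_surface :: 'a measure) (sphere 0 1) = ennreal (sphere_area TYPE('a))"
    "sphere_area TYPE('a) > 0"
    by (simp_all add: sphere_area_def measure_def emeasure_sphere_surface)
qed

lemma prob_space_sphere_uniform: "prob_space (sphere_uniform :: 'a::euclidean_space measure)"
  unfolding sphere_uniform_def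
  using sphere_area_pos[where 'a='a]
  by (intro prob_space_uniform_measure) (simp_all add: emeasure_sphere_surface_eq_area)

lemma space_sphere_uniform: "space (sphere_uniform :: 'a::euclidean_space measure) = sphere 0 1"
  by (simp add: sphere_uniform_def space_sphere_surface)

lemma borel_measurable_sphere_uniform_inner[measurable]:
  "(\<lambda>\<theta>::'a::euclidean_space. V \<bullet> \<theta>) \<in> borel_measurable sphere_uniform"
  unfolding sphere_uniform_def by (simp cong: measurable_cong_sets)

lemma integral_sphere_uniform_exp_inner:
  fixes V :: "'a::euclidean_space"
  assumes "norm V = 1" "k > 0"
  shows "(\<integral>\<theta>. exp (k * (V \<bullet> \<theta>)) \<partial>sphere_uniform) = 1 / (vMF_const DIM('a) k * sphere_area TYPE('a))"
proof -
  have "(\<integral>\<^sup>+\<theta>. ennreal (exp (k * (V \<bullet> \<theta>))) \<partial>sphere_uniform) =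
      (\<integral>\<^sup>+\<theta>. ennreal (exp (k * (V \<bullet> \<theta>))) * indicator (sphere 0 1) \<theta> \<partial>(sphere_surface :: 'a measure)) /
        emeasure sphere_surface (sphere (0::'a) 1)"
    unfolding sphere_uniform_def
    by (rule nn_integral_uniform_measure) (simp_all flip: space_sphere_surface)
  also have "(\<integral>\<^sup>+\<theta>. ennreal (exp (k * (V \<bullet> \<theta>))) * indicator (sphere 0 1) \<theta> \<partial>(sphere_surface :: 'a measure)) =
      (\<integral>\<^sup>+\<theta>. ennreal (exp (k * (V \<bullet> \<theta>))) \<partial>sphere_surface)"
    by (rule nn_integral_cong) (simp add: space_sphere_surface)
  also have "\<dots> = ennreal (1 / vMF_const DIM('a) k)"
    by (rule nn_integral_sphere_exp_inner[OF assms])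
  finally show ?thesis
    using sphere_area_pos[where 'a='a] nn_integral_sphere_exp_inner(2)[OF assms]
    by (subst integral_eq_nn_integral)
      (simp_all add: emeasure_sphere_surface_eq_area divide_ennreal)
qed

lemma exp_inner_sphere_range:
  fixes V x :: "'a::euclidean_space"
  assumes "norm V = 1" "x \<in> sphere 0 1" "\<kappa> > 0"
  shows "exp (- \<kappa>) \<le> exp (\<kappa> * (V \<bullet> x)) \<and> exp (\<kappa> * (V \<bullet> x)) \<le> exp \<kappa>"
proof -
  have "\<bar>V \<bullet> x\<bar> \<le> 1" using assms Cauchy_Schwarz_ineq2[of V x] by simp
  then have "- \<kappa> \<le> \<kappa> * (V \<bullet> x)" "\<kappa> * (V \<bullet> x) \<le> \<kappa>"
    using \<open>\<kappa> > 0\<close> mult_left_mono[of "-1" "V \<bullet> x" \<kappa>] mult_left_mono[of "V \<bullet> x" 1 \<kappa>]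
    by (simp_all add: abs_le_iff)
  then show ?thesis by simp
qed

lemma P_0_eq_mean:
  fixes V A :: "real^'n"
  assumes "norm V = 1" "\<kappa> > 0"
  shows "P_0 n V \<kappa> A = exp (\<kappa> * (V \<bullet> A)) / (real n * (\<integral>x. exp (\<kappa> * (V \<bullet> x)) \<partial>sphere_uniform))"
  by (simp add: P_0_def f_vMF_def integral_sphere_uniform_exp_inner[OF assms])

theorem proposition2:
  fixes V A :: "real^'n" and \<kappa> :: real
  assumes "CARD('n) \<ge> 2"
    and "V \<in> sphere 0 1" and "A \<in> sphere 0 1"
    and "\<kappa> > 0"
  shows "(\<lambda>n. P_Bexp n V \<kappa> A - P_0 n V \<kappa> A) \<in> o(\<lambda>n. 1 / (real n * sqrt (real n)))"
proof -
  \<comment> \<open>The bound holds in every dimension.\<close>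
  have V: "norm V = 1" using assms(2) by simp
  define a where "a = exp (\<kappa> * (V \<bullet> A))"
  interpret bounded_sample sphere_uniform "\<lambda>x. exp (\<kappa> * (V \<bullet> x))" "exp (- \<kappa>)" "exp \<kappa>"
  proof (rule bounded_sample.intro[OF prob_space_sphere_uniform])
    show "(\<lambda>x. exp (\<kappa> * (V \<bullet> x))) \<in> borel_measurable sphere_uniform" by measurable
  qed (use exp_inner_sphere_range[OF V _ \<open>\<kappa> > 0\<close>] in \<open>simp_all add: space_sphere_uniform\<close>)
  define K where "K = a\<^sup>2 / mean\<^sup>2 + a * (a\<^sup>2 + (exp \<kappa>)\<^sup>2) / (mean\<^sup>2 * exp (- \<kappa>))"
  have "\<bar>P_Bexp n V \<kappa> A - P_0 n V \<kappa> A\<bar> \<le> K / (real n)\<^sup>2" if "1 \<le> n" for n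
    using integral_ratio_bound[of a n] that
    by (simp add: P_Bexp_def P_0_eq_mean[OF V \<open>\<kappa> > 0\<close>] K_def a_def sample_sum_def mean_def)
  then have "(\<lambda>n. P_Bexp n V \<kappa> A - P_0 n V \<kappa> A) \<in> O(\<lambda>n. 1 / (real n)\<^sup>2)"
    by (intro bigoI[where c=K] eventually_mono[OF eventually_ge_at_top[of 1]]) simp
  also have "(\<lambda>n. 1 / (real n)\<^sup>2) \<in> o(\<lambda>n. 1 / (real n * sqrt (real n)))" by real_asymp
  finally show ?thesis .
qed

end
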